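(* Let $\mathcal N$ and $\mathcal M$ be quantum channels satisfying $s$-detailed balance with respect to $\rho_\beta$, with $\mathcal N$ having $\rho_\beta$ as unique fixed state and spectrum in $[0,1]$. Let $\{Y_i\}_i$, $\lambda_i$, $\alpha_{ij}$ and $\mathrm{SC}$ be as defined in the context. If the map $\widehat{\mathcal M}$ satisfies $s$-detailed balance with respect to $\rho_\beta$, then $\mathrm{SC}\le\mathrm{Cov}_{\rho_\beta}(\mathcal M)$.
   Context: $H$ is an $n$-qubit Hermitian operator, $\beta>0$, $\rho_\beta=e^{-\beta H}/\operatorname{tr}(e^{-\beta H})$. $\mathcal T^\dagger$ denotes the Hilbert–Schmidt adjoint of a linear map $\mathcal T$ (for a channel with Kraus operators $K_u$, $\mathcal T^\dagger(X)=\sum_uK_u^\dagger XK_u$). $\langle A,B\rangle_s=\operatorname{tr}(A^\dagger\rho_\beta^{1-s}B\rho_\beta^s)$; a linear map $\mathcal T$ satisfies $s$-detailed balance if $\langle A,\mathcal T^\dagger(B)\rangle_s=\langle\mathcal T^\dagger(A),B\rangle_s$ for all $A,B$. $\mathcal M$ has Kraus operators $\{O_u\}_u$ indexed by finitely many real outcomes $u$; $\mathbb E_{\rho_\beta}(\mathcal M)=\sum_uu\operatorname{tr}(O_u\rho_\beta O_u^\dagger)$, $\mathrm{Cov}_{\rho_\beta}(\mathcal M)=\sum_{x,y}(x-\mathbb E_{\rho_\beta}(\mathcal M))(y-\mathbb E_{\rho_\beta}(\mathcal M))\operatorname{tr}(O_yO_x\rho_\beta O_x^\dagger O_y^\dagger)$,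 $\widehat{\mathcal M}(X)=\sum_u(u-\mathbb E_{\rho_\beta}(\mathcal M))O_uXO_u^\dagger$. Let $\mathcal E=\mathcal M\circ\mathcal N\circ\mathcal M$ and $\widehat{\mathcal E}=\mathcal M\circ\mathcal N\circ\widehat{\mathcal M}$. Let $\{Y_i\}_i$ be a basis of the $2^n\times2^n$ matrices, orthonormal w.r.t. $\langle\cdot,\cdot\rangle_s$, consisting of eigenvectors $\mathcal E^\dagger(Y_i)=\lambda_iY_i$ with $1=\lambda_1>\lambda_2\ge\lambda_3\ge\dots\ge0$ and $Y_1=I$. Define $\alpha_{ij}=\langle Y_j,\widehat{\mathcal E}^\dagger(Y_i)\rangle_s$ and the spectral covariance weight $\mathrm{SC}=\sum_j|\alpha_{1j}\alpha_{j1}|$. *)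

theory Defs
  imports "HOL-Analysis.Analysis"
begin

type_synonym 'd cmat = "complex^'d^'d"

definition cadj :: "'d::finite cmat \<Rightarrow> 'd cmat" where
  "cadj A = (\<chi> i j. cnj (A $ j $ i))"

definition cscale :: "complex \<Rightarrow> 'd::finite cmat \<Rightarrow> 'd cmat" where
  "cscale c A = (\<chi> i j. c * A $ i $ j)"

definition diagm :: "('d::finite \<Rightarrow> complex) \<Rightarrow> 'd cmat" where
  "diagm f = (\<chi> i j. if i = j then f i else 0)"

definition hermitian :: "'d::finite cmat \<Rightarrow> bool" where
  "hermitian A \<longleftrightarrow> cadj A = A"

definition qunitary :: "'d::finite cmat \<Rightarrow> bool" where
  "qunitary U \<longleftrightarrow> cadj U ** U = mat 1"

text \<open>Functional calculus for Hermitian matrices via a spectral decomposition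
  A = U diag(D) U^dagger (well defined, independent of the chosen decomposition).\<close>

definition hfun :: "(real \<Rightarrow> real) \<Rightarrow> 'd::finite cmat \<Rightarrow> 'd cmat" where
  "hfun f A = (case (SOME p. qunitary (fst p) \<and>
                  A = fst p ** diagm (\<lambda>i. complex_of_real (snd p i)) ** cadj (fst p)) of
     (U, D) \<Rightarrow> U ** diagm (\<lambda>i. complex_of_real (f (D i))) ** cadj U)"

definition gibbs :: "real \<Rightarrow> 'd::finite cmat \<Rightarrow> 'd cmat" where
  "gibbs \<beta> H = (let E = hfun (\<lambda>x. exp (- \<beta> * x)) H in cscale (inverse (trace E)) E)"

definition mpowr :: "'d::finite cmat \<Rightarrow> real \<Rightarrow> 'd cmat" where
  "mpowr \<rho> t = hfun (\<lambda>x. x powr t) \<rho>"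

definition sinner :: "real \<Rightarrow> 'd::finite cmat \<Rightarrow> 'd cmat \<Rightarrow> 'd cmat \<Rightarrow> complex" where
  "sinner s \<rho> A B = trace (cadj A ** mpowr \<rho> (1 - s) ** B ** mpowr \<rho> s)"

text \<open>s-detailed balance of a linear map T, given through its Hilbert-Schmidt adjoint Tdag.\<close>

definition detailed_balance :: "real \<Rightarrow> 'd::finite cmat \<Rightarrow> ('d cmat \<Rightarrow> 'd cmat) \<Rightarrow> bool" where
  "detailed_balance s \<rho> Tdag \<longleftrightarrow>
     (\<forall>A B. sinner s \<rho> A (Tdag B) = sinner s \<rho> (Tdag A) B)"

definition wkraus :: "('u \<Rightarrow> real) \<Rightarrow> ('u \<Rightarrow> 'd::finite cmat) \<Rightarrow> 'u set \<Rightarrow> 'd cmat \<Rightarrow> 'd cmat" where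
  "wkraus c K I X = (\<Sum>u\<in>I. cscale (complex_of_real (c u)) (K u ** X ** cadj (K u)))"

definition wkraus_adj :: "('u \<Rightarrow> real) \<Rightarrow> ('u \<Rightarrow> 'd::finite cmat) \<Rightarrow> 'u set \<Rightarrow> 'd cmat \<Rightarrow> 'd cmat" where
  "wkraus_adj c K I X = (\<Sum>u\<in>I. cscale (complex_of_real (c u)) (cadj (K u) ** X ** K u))"

abbreviation kraus :: "('u \<Rightarrow> 'd::finite cmat) \<Rightarrow> 'u set \<Rightarrow> 'd cmat \<Rightarrow> 'd cmat" where
  "kraus K I \<equiv> wkraus (\<lambda>_. 1) K I"

abbreviation kraus_adj :: "('u \<Rightarrow> 'd::finite cmat) \<Rightarrow> 'u set \<Rightarrow> 'd cmat \<Rightarrow> 'd cmat" where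
  "kraus_adj K I \<equiv> wkraus_adj (\<lambda>_. 1) K I"

definition is_channel :: "('u \<Rightarrow> 'd::finite cmat) \<Rightarrow> 'u set \<Rightarrow> bool" where
  "is_channel K I \<longleftrightarrow> finite I \<and> (\<Sum>u\<in>I. cadj (K u) ** K u) = mat 1"

definition psd :: "'d::finite cmat \<Rightarrow> bool" where
  "psd A \<longleftrightarrow> hermitian A \<and> (\<forall>v. 0 \<le> Re ((\<Sum>i\<in>UNIV. cnj (v $ i) * (A *v v) $ i)))"

definition density :: "'d::finite cmat \<Rightarrow> bool" where
  "density A \<longleftrightarrow> psd A \<and> trace A = 1"

definition expM :: "'d::finite cmat \<Rightarrow> (real \<Rightarrow> 'd cmat) \<Rightarrow> real set \<Rightarrow> real" where
  "expM \<rho> Ob U = Re (\<Sum>u\<in>U. complex_of_real u * trace (Ob u ** \<rho> ** cadj (Ob u)))"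

definition covM :: "'d::finite cmat \<Rightarrow> (real \<Rightarrow> 'd cmat) \<Rightarrow> real set \<Rightarrow> complex" where
  "covM \<rho> Ob U = (\<Sum>x\<in>U. \<Sum>y\<in>U.
      complex_of_real ((x - expM \<rho> Ob U) * (y - expM \<rho> Ob U)) *
      trace (Ob y ** Ob x ** \<rho> ** cadj (Ob x) ** cadj (Ob y)))"

definition Mhat :: "'d::finite cmat \<Rightarrow> (real \<Rightarrow> 'd cmat) \<Rightarrow> real set \<Rightarrow> 'd cmat \<Rightarrow> 'd cmat" where
  "Mhat \<rho> Ob U = wkraus (\<lambda>u. u - expM \<rho> Ob U) Ob U"

definition Mhat_adj :: "'d::finite cmat \<Rightarrow> (real \<Rightarrow> 'd cmat) \<Rightarrow> real set \<Rightarrow> 'd cmat \<Rightarrow> 'd cmat" where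
  "Mhat_adj \<rho> Ob U = wkraus_adj (\<lambda>u. u - expM \<rho> Ob U) Ob U"

end

theory Submission
  imports Defs
begin

text \<open>
  Put A = M-hat\<dagger>(I) and B = M\<dagger>(N\<dagger>(A)). Because M\<dagger>(I) = N\<dagger>(I) = I and all three maps are
  self-adjoint for the s-inner product, alpha_0j = <Y_j, A>_s and alpha_j0 = <B, Y_j>_s; hence
  Cauchy-Schwarz in the orthonormal basis gives SC \<le> |A| |B|, while Cov = <I, M-hat\<dagger>(A)>_s = |A|^2.
  Detailed balance conjugates eigenvectors of N\<dagger> into eigenvectors of N (through
  \<rho>^s X \<rho>^(1-s)), so the spectrum condition on N yields 0 \<le> N\<dagger> \<le> 1 as quadratic forms, and
  |B| \<le> |A| follows from Cauchy-Schwarz for the form <X, N\<dagger> Z>_s together with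
  <B, E\<dagger> B>_s \<le> |B|^2, i.e. lambda_i \<le> 1.
\<close>

section \<open>Real quadratic forms\<close>

lemma quadratic_nonpos_imp_linear_coeff_zero:
  fixes a b :: real
  assumes nonpos: "\<And>t. 2 * t * a + t\<^sup>2 * b \<le> 0" and "0 \<le> a"
  shows "a = 0"
proof (rule ccontr)
  assume "a \<noteq> 0"
  with \<open>0 \<le> a\<close> have "0 < a" by simp
  define t where "t = a / (\<bar>b\<bar> + 1)"
  have "0 < t" using \<open>0 < a\<close> by (simp add: t_def add_pos_nonneg)
  have "t * (\<bar>b\<bar> + 1) = a" by (simp add: t_def add_pos_nonneg)
  hence "t * \<bar>b\<bar> < a" using \<open>0 < t\<close> by (simp add: distrib_left)
  hence "t * t * \<bar>b\<bar> < t * a" using \<open>0 < t\<close> by (simp add: mult.assoc)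
  moreover have "- (t * t * \<bar>b\<bar>) \<le> t\<^sup>2 * b"
    using mult_left_mono[of "- \<bar>b\<bar>" b "t * t"] by (simp add: power2_eq_square)
  moreover have "0 < t * a" using \<open>0 < t\<close> \<open>0 < a\<close> by simp
  ultimately have "0 < 2 * t * a + t\<^sup>2 * b" by linarith
  with nonpos[of t] show False by linarith
qed

lemma bilinear_form_cauchy_schwarz:
  fixes g :: "'v::real_vector \<Rightarrow> 'v \<Rightarrow> real"
  assumes bil: "bilinear g" and sym: "\<And>x y. g x y = g y x" and psd: "\<And>x. 0 \<le> g x x"
  shows "(g x y)\<^sup>2 \<le> g x x * g y y"
proof -
  have quad: "0 \<le> g x x + 2 * t * g x y + t\<^sup>2 * g y y" for t
    using psd[of "x + t *\<^sub>R y"] sym[of y x]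
      bilinear_ladd[OF bil] bilinear_radd[OF bil] bilinear_lmul[OF bil] bilinear_rmul[OF bil]
    by (simp add: power2_eq_square algebra_simps)
  show ?thesis
  proof (cases "g y y = 0")
    case True
    have "g x y = 0"
    proof (rule ccontr)
      assume "g x y \<noteq> 0"
      have "0 \<le> g x x + 2 * (- (g x x + 1) / (2 * g x y)) * g x y"
        using quad[of "- (g x x + 1) / (2 * g x y)"] True by simp
      also have "\<dots> = -1" using \<open>g x y \<noteq> 0\<close> by (simp add: field_simps)
      finally show False by simp
    qed
    thus ?thesis using True by simp
  next
    case False
    with psd[of y] have "0 < g y y" by simp
    have "0 \<le> g x x + 2 * (- g x y / g y y) * g x y + (- g x y / g y y)\<^sup>2 * g y y"
      by (rule quad)
    also have "\<dots> = g x x - (g x y)\<^sup>2 / g y y"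
      using \<open>0 < g y y\<close> by (simp add: field_simps power2_eq_square)
    finally show ?thesis using \<open>0 < g y y\<close> by (simp add: divide_le_eq mult.commute)
  qed
qed

text \<open>Perturbing x along w = T x - m x: the quadratic t \<mapsto> 2 t g(w,w) + t^2 (\<dots>) is \<le> 0,
  which forces g(w,w) = 0.\<close>

lemma selfadjoint_rayleigh_max_imp_eigenvector:
  fixes T :: "'v::real_vector \<Rightarrow> 'v" and g :: "'v \<Rightarrow> 'v \<Rightarrow> real"
  assumes bil: "bilinear g" and sym: "\<And>x y. g x y = g y x"
    and nonneg: "\<And>x. 0 \<le> g x x" and definite: "\<And>x. g x x = 0 \<longleftrightarrow> x = 0"
    and lin: "linear T" and sa: "\<And>x y. g x (T y) = g (T x) y"
    and S: "subspace S" and inv: "T ` S \<subseteq> S" and "x \<in> S"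
    and bound: "\<And>z. z \<in> S \<Longrightarrow> g z (T z) \<le> m * g z z" and eqx: "g x (T x) = m * g x x"
  shows "T x = m *\<^sub>R x"
proof -
  define w where "w = T x - m *\<^sub>R x"
  have "w \<in> S" unfolding w_def using S \<open>x \<in> S\<close> inv by (simp add: subspace_diff subspace_scale image_subset_iff)
  have gw: "g w (T x) - m * g w x = g w w" unfolding w_def
    using bilinear_rsub[OF bil] bilinear_rmul[OF bil] by simp
  have "2 * t * g w w + t\<^sup>2 * (g w (T w) - m * g w w) \<le> 0" for t
  proof -
    have "x + t *\<^sub>R w \<in> S" using S \<open>x \<in> S\<close> \<open>w \<in> S\<close> by (simp add: subspace_add subspace_scale)
    moreover have "g (x + t *\<^sub>R w) (T (x + t *\<^sub>R w)) = g x (T x) + 2 * t * g w (T x) + t\<^sup>2 * g w (T w)"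
      using bilinear_ladd[OF bil] bilinear_radd[OF bil] bilinear_lmul[OF bil] bilinear_rmul[OF bil]
        linear_add[OF lin] linear_cmul[OF lin] sa[of x w] sym[of x "T w"] sym[of "T x" w]
      by (simp add: power2_eq_square algebra_simps)
    moreover have "g (x + t *\<^sub>R w) (x + t *\<^sub>R w) = g x x + 2 * t * g w x + t\<^sup>2 * g w w"
      using bilinear_ladd[OF bil] bilinear_radd[OF bil] bilinear_lmul[OF bil] bilinear_rmul[OF bil] sym[of x w]
      by (simp add: power2_eq_square algebra_simps)
    ultimately show ?thesis using bound[of "x + t *\<^sub>R w"] eqx gw by (simp add: algebra_simps)
  qed
  hence "g w w = 0" using quadratic_nonpos_imp_linear_coeff_zero nonneg by blast
  thus ?thesis using definite unfolding w_def by simp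
qed

lemma selfadjoint_rayleigh_eigenvector:
  fixes T :: "'v::euclidean_space \<Rightarrow> 'v" and g :: "'v \<Rightarrow> 'v \<Rightarrow> real"
  assumes bil: "bilinear g" and sym: "\<And>x y. g x y = g y x"
    and nonneg: "\<And>x. 0 \<le> g x x" and definite: "\<And>x. g x x = 0 \<longleftrightarrow> x = 0"
    and lin: "linear T" and sa: "\<And>x y. g x (T y) = g (T x) y"
    and S: "subspace S" and inv: "T ` S \<subseteq> S" and ne: "\<exists>y\<in>S. y \<noteq> 0"
  obtains x m where "x \<in> S" "x \<noteq> 0" "T x = m *\<^sub>R x" "\<And>z. z \<in> S \<Longrightarrow> g z (T z) \<le> m * g z z"
proof -
  have pos: "0 < g x x" if "x \<noteq> 0" for x using nonneg[of x] definite[of x] that by linarith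
  define K where "K = S \<inter> sphere 0 1"
  have "compact K" unfolding K_def
    using S closed_subspace compact_sphere by (metis Int_commute compact_Int_closed)
  obtain y where y: "y \<in> S" "y \<noteq> 0" using ne by blast
  hence "(1 / norm y) *\<^sub>R y \<in> K" unfolding K_def using S by (auto simp: subspace_scale)
  hence "K \<noteq> {}" by blast
  have "0 \<notin> K" unfolding K_def by auto
  define h where "h z = g z (T z) / g z z" for z
  have bb: "bounded_bilinear g" using bil bilinear_conv_bounded_bilinear by blast
  have "continuous_on UNIV T" using lin by (simp add: linear_continuous_on linear_conv_bounded_linear)
  moreover have "g z z \<noteq> 0" if "z \<in> K" for z
    using pos[of z] that \<open>0 \<notin> K\<close> by fastforce
  ultimately have "continuous_on K h" unfolding h_def
    by (intro continuous_on_divide bounded_bilinear.continuous_on[OF bb])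
      (auto intro: continuous_on_subset continuous_on_id)
  then obtain x where "x \<in> K" and xmax: "\<forall>z\<in>K. h z \<le> h x"
    using continuous_attains_sup[OF \<open>compact K\<close> \<open>K \<noteq> {}\<close>] by blast
  define m where "m = h x"
  have "x \<in> S" "x \<noteq> 0" using \<open>x \<in> K\<close> \<open>0 \<notin> K\<close> unfolding K_def by auto
  have bound: "g z (T z) \<le> m * g z z" if "z \<in> S" for z
  proof (cases "z = 0")
    case True thus ?thesis using bilinear_lzero[OF bil] by simp
  next
    case False
    define c where "c = 1 / norm z"
    have "c *\<^sub>R z \<in> K" unfolding K_def c_def using \<open>z \<in> S\<close> S False by (auto simp: subspace_scale)
    hence "h (c *\<^sub>R z) \<le> m" using xmax m_def by blast
    moreover have "h (c *\<^sub>R z) = h z" unfolding h_def using False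
      by (simp add: c_def bilinear_lmul[OF bil] bilinear_rmul[OF bil] linear_cmul[OF lin])
    ultimately show ?thesis unfolding h_def using pos[OF False] by (simp add: divide_le_eq)
  qed
  moreover have "g x (T x) = m * g x x" unfolding m_def h_def using pos[OF \<open>x \<noteq> 0\<close>] by simp
  ultimately have "T x = m *\<^sub>R x"
    by (intro selfadjoint_rayleigh_max_imp_eigenvector[where g = g and T = T and S = S,
          OF bil sym nonneg definite lin sa S inv \<open>x \<in> S\<close>])
  show thesis by (rule that[OF \<open>x \<in> S\<close> \<open>x \<noteq> 0\<close> \<open>T x = m *\<^sub>R x\<close> bound])
qed

lemma selfadjoint_quadratic_form_le:
  fixes T :: "'v::euclidean_space \<Rightarrow> 'v" and g :: "'v \<Rightarrow> 'v \<Rightarrow> real"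
  assumes bil: "bilinear g" and sym: "\<And>x y. g x y = g y x" and nonneg: "\<And>x. 0 \<le> g x x" and definite: "\<And>x. g x x = 0 \<longleftrightarrow> x = 0"
    and lin: "linear T" and sa: "\<And>x y. g x (T y) = g (T x) y"
    and eig: "\<And>x m. x \<noteq> 0 \<Longrightarrow> T x = m *\<^sub>R x \<Longrightarrow> m \<le> b"
  shows "g z (T z) \<le> b * g z z"
proof -
  have "\<exists>y\<in>UNIV. y \<noteq> (0::'v)" using nonzero_Basis nonempty_Basis by blast
  then obtain x m where "x \<in> UNIV" "x \<noteq> 0" "T x = m *\<^sub>R x"
    and max: "\<And>y. y \<in> UNIV \<Longrightarrow> g y (T y) \<le> m * g y y"
    by (rule selfadjoint_rayleigh_eigenvector[where g = g and T = T and S = UNIV,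
          OF bil sym nonneg definite lin sa subspace_UNIV subset_UNIV])
      (rule that)
  have "g z (T z) \<le> m * g z z" by (rule max) simp
  also have "\<dots> \<le> b * g z z" using eig[OF \<open>x \<noteq> 0\<close> \<open>T x = m *\<^sub>R x\<close>] nonneg
    by (rule mult_right_mono)
  finally show ?thesis .
qed

lemma selfadjoint_quadratic_form_ge:
  fixes T :: "'v::euclidean_space \<Rightarrow> 'v" and g :: "'v \<Rightarrow> 'v \<Rightarrow> real"
  assumes bil: "bilinear g" and sym: "\<And>x y. g x y = g y x" and nonneg: "\<And>x. 0 \<le> g x x" and definite: "\<And>x. g x x = 0 \<longleftrightarrow> x = 0"
    and lin: "linear T" and sa: "\<And>x y. g x (T y) = g (T x) y"
    and eig: "\<And>x m. x \<noteq> 0 \<Longrightarrow> T x = m *\<^sub>R x \<Longrightarrow> a \<le> m"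
  shows "a * g z z \<le> g z (T z)"
proof -
  have "g z (- T z) \<le> (- a) * g z z"
  proof (rule selfadjoint_quadratic_form_le[where g = g and T = "\<lambda>y. - T y",
        OF bil sym nonneg definite])
    show "linear (\<lambda>y. - T y)" using lin by (simp add: linear_compose_neg)
    show "g x (- T y) = g (- T x) y" for x y
      by (simp add: bilinear_rneg[OF bil] bilinear_lneg[OF bil] sa)
    show "m \<le> - a" if "x \<noteq> 0" and "- T x = m *\<^sub>R x" for x m
    proof -
      have "T x = (- m) *\<^sub>R x" using arg_cong[OF that(2), of uminus] by simp
      thus ?thesis using eig[OF \<open>x \<noteq> 0\<close>] by fastforce
    qed
  qed
  thus ?thesis using bilinear_rneg[OF bil] by simp
qed

text \<open>For 0 \<le> N \<le> 1 the form x, y \<mapsto> g x (N y) is positive semidefinite, and Cauchy-Schwarz for it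
  gives (g b b)^2 = (g a (N (M b)))^2 \<le> g a (N a) * g (M b) (N (M b)) \<le> g a a * g b b for b = M (N a).\<close>

lemma selfadjoint_sandwich_le:
  fixes g :: "'v::real_vector \<Rightarrow> 'v \<Rightarrow> real"
  assumes bil: "bilinear g" and sym: "\<And>x y. g x y = g y x" and psd: "\<And>x. 0 \<le> g x x"
    and N_lin: "linear N" and N_sa: "\<And>x y. g x (N y) = g (N x) y"
    and N_nonneg: "\<And>x. 0 \<le> g x (N x)" and N_le: "\<And>x. g x (N x) \<le> g x x"
    and M_sa: "\<And>x y. g x (M y) = g (M x) y" and MNM_le: "\<And>x. g x (M (N (M x))) \<le> g x x"
  shows "g (M (N a)) (M (N a)) \<le> g a a"
proof -
  define b where "b = M (N a)"
  define \<psi> where "\<psi> x y = g x (N y)" for x y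
  have \<psi>_bil: "bilinear \<psi>"
    using bil N_lin unfolding bilinear_def \<psi>_def by (auto intro: linear_compose[unfolded o_def])
  have \<psi>_sym: "\<psi> x y = \<psi> y x" for x y unfolding \<psi>_def using N_sa sym by metis
  have "g b b = g (M (N a)) b" by (simp add: b_def)
  also have "\<dots> = g (N a) (M b)" by (rule M_sa[symmetric])
  also have "\<dots> = \<psi> a (M b)" unfolding \<psi>_def by (rule N_sa[symmetric])
  finally have "(g b b)\<^sup>2 = (\<psi> a (M b))\<^sup>2" by simp
  also have "\<dots> \<le> \<psi> a a * \<psi> (M b) (M b)"
    by (rule bilinear_form_cauchy_schwarz[OF \<psi>_bil \<psi>_sym]) (simp add: \<psi>_def N_nonneg)
  also have "\<dots> \<le> g a a * g b b"
  proof (rule mult_mono)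
    show "\<psi> a a \<le> g a a" unfolding \<psi>_def by (rule N_le)
    have "\<psi> (M b) (M b) = g b (M (N (M b)))" unfolding \<psi>_def by (rule M_sa[symmetric])
    thus "\<psi> (M b) (M b) \<le> g b b" using MNM_le by simp
    show "0 \<le> g a a" "0 \<le> \<psi> (M b) (M b)" unfolding \<psi>_def by (rule psd N_nonneg)+
  qed
  finally have "(g b b)\<^sup>2 \<le> g a a * g b b" .
  thus ?thesis using psd[of a] psd[of b] unfolding b_def[symmetric]
    by (cases "g b b = 0") (auto simp: power2_eq_square)
qed

section \<open>Spectral theorem for Hermitian matrices\<close>

definition cinner :: "complex^'d::finite \<Rightarrow> complex^'d \<Rightarrow> complex" where
  "cinner v w = (\<Sum>i\<in>UNIV. cnj (v$i) * w$i)"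

lemma Re_cinner: "Re (cinner v w) = v \<bullet> w"
  by (simp add: cinner_def inner_vec_def inner_complex_def)

lemma cinner_eq_0_iff: "cinner v w = 0 \<longleftrightarrow> v \<bullet> w = 0 \<and> (\<i> *s v) \<bullet> w = 0"
proof -
  have "Im (cinner v w) = (\<i> *s v) \<bullet> w"
    by (simp add: cinner_def inner_vec_def inner_complex_def)
  thus ?thesis using Re_cinner by (metis complex_eq_iff zero_complex.simps)
qed

lemma cinner_add_right: "cinner v (w + z) = cinner v w + cinner v z"
  by (simp add: cinner_def distrib_left sum.distrib)

lemma cinner_scaleR_right: "cinner v (r *\<^sub>R w) = of_real r * cinner v w"
proof -
  have "(r *\<^sub>R w) $ i = of_real r * w $ i" for i
    by (simp only: vector_scaleR_component) (simp add: scaleR_conv_of_real)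
  thus ?thesis by (simp add: cinner_def sum_distrib_left algebra_simps)
qed

lemma cinner_scale_left: "cinner (c *s v) w = cnj c * cinner v w"
  by (simp add: cinner_def sum_distrib_left algebra_simps)

lemma cinner_commute: "cinner w v = cnj (cinner v w)"
  by (simp add: cinner_def mult.commute)

lemma cinner_self: "cinner v v = of_real ((norm v)\<^sup>2)"
proof -
  have "(norm v)\<^sup>2 = (\<Sum>i\<in>UNIV. (norm (v$i))\<^sup>2)"
    unfolding norm_vec_def L2_set_def by (simp add: sum_nonneg)
  hence "of_real ((norm v)\<^sup>2) = (\<Sum>i\<in>UNIV. of_real ((norm (v$i))\<^sup>2) :: complex)" by simp
  also have "\<dots> = cinner v v" unfolding cinner_def complex_norm_square by (simp add: mult.commute)
  finally show ?thesis by simp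
qed

lemma hermitian_entry: "hermitian H \<Longrightarrow> cnj (H$i$j) = H$j$i"
  unfolding hermitian_def cadj_def by (metis vec_lambda_beta)

lemma cinner_hermitian: assumes "hermitian H" shows "cinner v (H *v w) = cinner (H *v v) w"
proof -
  have "cinner v (H *v w) = (\<Sum>i\<in>UNIV. \<Sum>j\<in>UNIV. cnj (v$i) * H$i$j * w$j)"
    by (simp add: cinner_def matrix_vector_mult_def sum_distrib_left mult.assoc)
  also have "\<dots> = (\<Sum>j\<in>UNIV. \<Sum>i\<in>UNIV. cnj (v$i) * H$i$j * w$j)" by (rule sum.swap)
  also have "\<dots> = cinner (H *v v) w"
    by (simp add: cinner_def matrix_vector_mult_def sum_distrib_right hermitian_entry[OF assms]
        sum_distrib_left mult.commute mult.left_commute)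
  finally show ?thesis .
qed

text \<open>Complex orthogonality to v is real orthogonality to both v and i v, so fewer than
  CARD('d) complex conditions leave a nonzero solution in the real space of dimension 2 CARD('d).\<close>

lemma cinner_orthogonal_nonzero:
  fixes v :: "'i \<Rightarrow> complex^'d::finite"
  assumes "finite F" and "card F < CARD('d)"
  shows "\<exists>y. y \<noteq> 0 \<and> (\<forall>j\<in>F. cinner (v j) y = 0)"
proof -
  define G where "G = v ` F \<union> (\<lambda>j. \<i> *s v j) ` F"
  have "card G \<le> card F + card F"
    unfolding G_def using card_Un_le card_image_le[OF \<open>finite F\<close>] by (meson add_mono order_trans)
  moreover have "dim G \<le> card G" using \<open>finite F\<close> unfolding G_def by (intro dim_le_card') auto
  ultimately have "dim G < DIM(complex^'d)" using assms(2) by simp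
  then obtain y :: "complex^'d" where "y \<noteq> 0" and y: "span G \<subseteq> {x. y \<bullet> x = 0}"
    using lowdim_subset_hyperplane by blast
  have "cinner (v j) y = 0" if "j \<in> F" for j
  proof -
    have "v j \<in> G" "\<i> *s v j \<in> G" unfolding G_def using that by auto
    hence "y \<bullet> v j = 0" "y \<bullet> (\<i> *s v j) = 0" using y span_base by blast+
    thus ?thesis by (simp add: cinner_eq_0_iff inner_commute)
  qed
  thus ?thesis using \<open>y \<noteq> 0\<close> by blast
qed

text \<open>Rayleigh's principle for the real inner product of complex^'d, viewed as a real
  Euclidean space, for which a Hermitian matrix is self-adjoint.\<close>

lemma hermitian_unit_eigenvector:
  fixes H :: "complex^'d::finite^'d"
  assumes h: "hermitian H" and S: "subspace S" and inv: "(\<lambda>z. H *v z) ` S \<subseteq> S"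
    and ne: "\<exists>y\<in>S. y \<noteq> 0"
  obtains u \<mu> where "u \<in> S" "cinner u u = 1" "H *v u = of_real \<mu> *s u"
proof -
  have bil: "bilinear (inner :: complex^'d \<Rightarrow> _)"
    using bilinear_conv_bounded_bilinear bounded_bilinear_inner by blast
  have sa: "x \<bullet> (H *v y) = (H *v x) \<bullet> y" for x y
    using cinner_hermitian[OF h] Re_cinner by metis
  obtain x \<mu> where "x \<in> S" "x \<noteq> 0" "H *v x = \<mu> *\<^sub>R x"
    by (rule selfadjoint_rayleigh_eigenvector[where g = inner and T = "\<lambda>x. H *v x" and S = S,
          OF bil inner_commute inner_ge_zero inner_eq_zero_iff matrix_vector_mul_linear sa S inv ne])
  define u where "u = (1 / norm x) *\<^sub>R x"
  have "u \<in> S" unfolding u_def using \<open>x \<in> S\<close> S by (simp add: subspace_scale)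
  moreover have "cinner u u = 1" unfolding cinner_self u_def using \<open>x \<noteq> 0\<close> by simp
  moreover have "H *v u = (1 / norm x) *\<^sub>R (H *v x)"
    unfolding u_def by (rule linear_cmul[OF matrix_vector_mul_linear])
  hence "H *v u = of_real \<mu> *s u"
    unfolding \<open>H *v x = \<mu> *\<^sub>R x\<close> u_def vec_eq_iff vector_scaleR_component vector_smult_component
    by (simp add: scaleR_conv_of_real)
  ultimately show thesis by (rule that)
qed

lemma hermitian_orthonormal_eigenvectors:
  fixes H :: "complex^'d::finite^'d" and F :: "'d set"
  assumes h: "hermitian H" and "finite F"
  shows "\<exists>v m. \<forall>j\<in>F. H *v v j = of_real (m j) *s v j \<and>
                (\<forall>k\<in>F. cinner (v j) (v k) = (if j = k then 1 else 0))"
  using \<open>finite F\<close>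
proof (induction F rule: finite_induct)
  case empty
  then show ?case by simp
next
  case (insert a F)
  then obtain v m where vm: "\<forall>j\<in>F. H *v v j = of_real (m j) *s v j \<and>
                (\<forall>k\<in>F. cinner (v j) (v k) = (if j = k then 1 else 0))" by blast
  define S where "S = {z. \<forall>j\<in>F. cinner (v j) z = 0}"
  have "subspace S" unfolding S_def subspace_def
    by (auto simp: cinner_add_right cinner_scaleR_right) (simp add: cinner_def)
  moreover have "(\<lambda>z. H *v z) ` S \<subseteq> S"
    using vm by (auto simp: S_def cinner_hermitian[OF h] cinner_scale_left)
  moreover have "card F < CARD('d)"
    using insert(2) by (intro psubset_card_mono) auto
  hence "\<exists>y\<in>S. y \<noteq> 0" using cinner_orthogonal_nonzero[OF insert(1)] unfolding S_def by blast
  ultimately obtain u \<mu> where "u \<in> S" "cinner u u = 1" "H *v u = of_real \<mu> *s u"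
    by (rule hermitian_unit_eigenvector[OF h])
  have orth: "cinner (v j) u = 0" "cinner u (v j) = 0" if "j \<in> F" for j
    using \<open>u \<in> S\<close> that cinner_commute[of u "v j"] unfolding S_def by auto
  define v' where "v' = v(a := u)"
  define m' where "m' = m(a := \<mu>)"
  have "H *v v' j = of_real (m' j) *s v' j" if "j \<in> insert a F" for j
    using that vm \<open>H *v u = of_real \<mu> *s u\<close> by (cases "j = a") (auto simp: v'_def m'_def)
  moreover have "cinner (v' j) (v' k) = (if j = k then 1 else 0)"
    if "j \<in> insert a F" "k \<in> insert a F" for j k
    using that vm \<open>cinner u u = 1\<close> orth insert(2)
    by (cases "j = a"; cases "k = a") (auto simp: v'_def)
  ultimately show ?case by blast
qed

lemma unitary_right: "qunitary U \<Longrightarrow> U ** cadj U = mat 1"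
  unfolding qunitary_def using matrix_left_right_inverse by blast

lemma hermitian_unitary_diagonalization:
  fixes H :: "complex^'d::finite^'d"
  assumes h: "hermitian H"
  shows "\<exists>U D. qunitary U \<and> H = U ** diagm (\<lambda>i. of_real (D i)) ** cadj U"
proof -
  obtain v :: "'d \<Rightarrow> complex^'d" and m :: "'d \<Rightarrow> real"
    where vm: "\<forall>j\<in>UNIV. H *v v j = of_real (m j) *s v j \<and>
                (\<forall>k\<in>UNIV. cinner (v j) (v k) = (if j = k then 1 else 0))"
    using hermitian_orthonormal_eigenvectors[OF h finite] by blast
  define U :: "complex^'d^'d" where "U = (\<chi> i j. v j $ i)"
  have "(cadj U ** U) $ j $ k = cinner (v j) (v k)" for j k
    by (simp add: U_def cadj_def matrix_matrix_mult_def cinner_def)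
  hence "qunitary U" unfolding qunitary_def vec_eq_iff using vm by (simp add: mat_def)
  have "(H ** U) $ i $ k = (U ** diagm (\<lambda>i. of_real (m i))) $ i $ k" for i k
  proof -
    have "(H ** U) $ i $ k = (H *v v k) $ i"
      by (simp add: U_def matrix_matrix_mult_def matrix_vector_mult_def)
    also have "\<dots> = (U ** diagm (\<lambda>i. of_real (m i))) $ i $ k"
      using vm by (simp add: U_def matrix_matrix_mult_def diagm_def if_distrib if_distribR cong: if_cong)
    finally show ?thesis .
  qed
  hence "H ** U = U ** diagm (\<lambda>i. of_real (m i))" by (simp add: vec_eq_iff)
  hence "H = U ** diagm (\<lambda>i. of_real (m i)) ** cadj U"
    using unitary_right[OF \<open>qunitary U\<close>] by (metis matrix_mul_assoc matrix_mul_rid)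
  thus ?thesis using \<open>qunitary U\<close> by blast
qed

section \<open>Matrix algebra\<close>

lemma of_real_cmod_power2: "(of_real (cmod z))\<^sup>2 = z * cnj z"
  by (metis complex_norm_square of_real_power)

lemma cnj_mult_self: "cnj z * z = of_real ((cmod z)\<^sup>2)"
  by (metis complex_norm_square mult.commute)

lemma cadj_entry: "cadj A $ i $ j = cnj (A $ j $ i)"
  by (simp add: cadj_def)

lemma cscale_entry: "cscale c A $ i $ j = c * A $ i $ j"
  by (simp add: cscale_def)

lemma cadj_cadj [simp]: "cadj (cadj A) = A"
  by (simp add: cadj_def vec_eq_iff)

lemma cadj_mat1 [simp]: "cadj (mat 1 :: 'd::finite cmat) = mat 1"
  by (simp add: cadj_def mat_def vec_eq_iff)

lemma cadj_mult: "cadj (A ** B) = cadj B ** (cadj A :: 'd::finite cmat)"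
  by (simp add: cadj_def matrix_matrix_mult_def vec_eq_iff mult.commute)

lemma cadj_add: "cadj (A + B) = cadj A + cadj (B :: 'd::finite cmat)"
  by (simp add: vec_eq_iff cadj_entry)

lemma cadj_cscale: "cadj (cscale c A) = cscale (cnj c) (cadj (A :: 'd::finite cmat))"
  by (simp add: vec_eq_iff cadj_entry cscale_entry)

lemma cadj_sum: "cadj (sum f I) = (\<Sum>x\<in>I. cadj (f x :: 'd::finite cmat))"
  by (simp add: vec_eq_iff cadj_entry)

lemma cscale_one [simp]: "cscale 1 A = (A :: 'd::finite cmat)"
  by (simp add: vec_eq_iff cscale_entry)

lemma cscale_zero [simp]: "cscale 0 A = (0 :: 'd::finite cmat)"
  by (simp add: vec_eq_iff cscale_entry)

lemma cscale_cscale: "cscale a (cscale b A) = cscale (a * b) (A :: 'd::finite cmat)"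
  by (simp add: vec_eq_iff cscale_entry mult.assoc)

lemma cscale_add: "cscale c (A + B) = cscale c A + cscale c (B :: 'd::finite cmat)"
  by (simp add: vec_eq_iff cscale_entry distrib_left)

lemma cscale_sum: "cscale c (sum f I) = (\<Sum>x\<in>I. cscale c (f x :: 'd::finite cmat))"
  by (simp add: vec_eq_iff cscale_entry sum_distrib_left)

lemma scaleR_eq_cscale: "r *\<^sub>R A = cscale (of_real r) (A :: 'd::finite cmat)"
  unfolding vec_eq_iff cscale_entry by (simp only: vector_scaleR_component) (simp add: scaleR_conv_of_real)

lemma cscale_mult_left: "cscale c A ** B = cscale c (A ** (B :: 'd::finite cmat))"
  by (simp add: vec_eq_iff cscale_entry matrix_matrix_mult_def sum_distrib_left mult.assoc)

lemma cscale_mult_right: "A ** cscale c B = cscale c (A ** (B :: 'd::finite cmat))"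
  by (simp add: vec_eq_iff cscale_entry matrix_matrix_mult_def sum_distrib_left mult_ac)

lemma matrix_add_rdistrib: "(A + B) ** C = A ** C + B ** (C :: 'd::finite cmat)"
  by (simp add: vec_eq_iff matrix_matrix_mult_def distrib_right sum.distrib)

lemma matrix_sum_left: "sum f I ** B = (\<Sum>x\<in>I. f x ** (B :: 'd::finite cmat))"
proof -
  have "(sum f I ** B) $ i $ j = (\<Sum>x\<in>I. f x ** B) $ i $ j" for i j
    unfolding sum_component matrix_matrix_mult_def
    by (simp add: sum_distrib_right) (rule sum.swap)
  thus ?thesis by (simp add: vec_eq_iff)
qed

lemma matrix_sum_right: "B ** sum f I = (\<Sum>x\<in>I. B ** (f x :: 'd::finite cmat))"
proof -
  have "(B ** sum f I) $ i $ j = (\<Sum>x\<in>I. B ** f x) $ i $ j" for i j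
    unfolding sum_component matrix_matrix_mult_def
    by (simp add: sum_distrib_left) (rule sum.swap)
  thus ?thesis by (simp add: vec_eq_iff)
qed

lemma trace_cscale: "trace (cscale c (A :: 'd::finite cmat)) = c * trace A"
  by (simp add: trace_def cscale_entry sum_distrib_left)

lemma trace_sum: "trace (sum f I) = (\<Sum>x\<in>I. trace (f x :: 'd::finite cmat))"
  by (simp add: trace_def) (rule sum.swap)

lemma trace_mult_unit_eq_entry:
  "trace (A ** (\<chi> k l. if k = j \<and> l = i then 1 else 0)) = (A $ i $ j :: complex)"
proof -
  have "trace (A ** (\<chi> k l. if k = j \<and> l = i then 1 else 0)) =
      (\<Sum>a\<in>UNIV. \<Sum>k\<in>UNIV. A$a$k * (if k = j \<and> a = i then 1 else 0))"
    by (simp add: trace_def matrix_matrix_mult_def)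
  also have "\<dots> = (\<Sum>a\<in>UNIV. if a = i then A$i$j else 0)"
    by (intro sum.cong refl) (simp add: if_distrib cong: if_cong)
  also have "\<dots> = A$i$j" by simp
  finally show ?thesis .
qed

lemma matrix_eq_if_trace_mult_eq:
  fixes A C :: "'d::finite cmat"
  assumes "\<And>B. trace (A ** B) = trace (C ** B)"
  shows "A = C"
proof -
  have "A $ i $ j = C $ i $ j" for i j
    using assms[of "\<chi> k l. if k = j \<and> l = i then 1 else 0"] by (simp only: trace_mult_unit_eq_entry)
  thus ?thesis by (simp add: vec_eq_iff)
qed

lemma diagm_diag_entry [simp]: "diagm f $ i $ i = f i"
  by (simp add: diagm_def)

lemma diagm_one: "diagm (\<lambda>i. 1) = mat 1"
  by (simp add: diagm_def mat_def)

lemma mult_diagm_entry: "(A ** diagm f) $ i $ j = A $ i $ j * (f j :: complex)"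
  unfolding matrix_matrix_mult_def diagm_def by (simp add: if_distrib cong: if_cong)

lemma diagm_mult: "diagm f ** diagm g = diagm (\<lambda>i. f i * (g i :: complex))"
  unfolding vec_eq_iff mult_diagm_entry by (simp add: diagm_def)

lemma mult_diagm_mult_entry: "(A ** diagm f ** B) $ i $ j = (\<Sum>k\<in>UNIV. A $ i $ k * f k * B $ k $ j)"
  by (simp add: matrix_matrix_mult_def[of "A ** diagm f"] mult_diagm_entry)

lemma unitary_conj_diagm_mult:
  assumes "qunitary U"
  shows "(U ** diagm f ** cadj U) ** (U ** diagm g ** cadj U) = U ** diagm (\<lambda>i. f i * g i) ** cadj U"
proof -
  have "(U ** diagm f ** cadj U) ** (U ** diagm g ** cadj U) =
      U ** diagm f ** (cadj U ** U) ** diagm g ** cadj U"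
    by (simp add: matrix_mul_assoc)
  also have "\<dots> = U ** diagm (\<lambda>i. f i * g i) ** cadj U"
    using assms by (simp add: qunitary_def matrix_mul_assoc[symmetric] diagm_mult)
  finally show ?thesis .
qed

lemma trace_unitary_conj_diagm:
  assumes "qunitary U"
  shows "trace (U ** diagm f ** cadj U) = sum f UNIV"
proof -
  have "trace (U ** diagm f ** cadj U) = trace (cadj U ** (U ** diagm f))" by (rule trace_mul_sym)
  also have "\<dots> = trace (diagm f)" using assms by (simp add: qunitary_def matrix_mul_assoc)
  finally show ?thesis by (simp add: diagm_def trace_def)
qed

lemma cscale_conj_diagm: "cscale c (U ** diagm f ** V) = U ** diagm (\<lambda>i. c * f i) ** V"
  by (simp add: cscale_def mult_diagm_mult_entry vec_eq_iff sum_distrib_left mult_ac)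

text \<open>The diagonal of V* U diag(a) U* V is a convex combination of the a_k with weights |(V* U)_ik|^2.\<close>

lemma unitary_conj_diagm_pos:
  assumes U: "qunitary U" and V: "qunitary V"
    and eq: "U ** diagm (\<lambda>i. of_real (a i)) ** cadj U = V ** diagm (\<lambda>i. of_real (b i)) ** cadj V"
    and pos: "\<And>k. 0 < a k"
  shows "0 < b i"
proof -
  define W where "W = cadj V ** U"
  have "W ** cadj W = cadj V ** (U ** cadj U) ** V"
    unfolding W_def cadj_mult by (simp add: matrix_mul_assoc)
  hence "W ** cadj W = mat 1" using V unitary_right[OF U] by (simp add: qunitary_def)
  have "of_real (\<Sum>k\<in>UNIV. (cmod (W$i$k))\<^sup>2) = (W ** cadj W) $ i $ i"
    by (simp add: matrix_matrix_mult_def cadj_entry of_real_cmod_power2)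
  also have "\<dots> = 1" using \<open>W ** cadj W = mat 1\<close> by (simp add: mat_def)
  finally have norm_row: "(\<Sum>k\<in>UNIV. (cmod (W$i$k))\<^sup>2) = 1" by (simp only: of_real_eq_1_iff)
  have "\<exists>k. W$i$k \<noteq> 0"
  proof (rule ccontr)
    assume "\<nexists>k. W$i$k \<noteq> 0"
    hence "(\<Sum>k\<in>UNIV. (cmod (W$i$k))\<^sup>2) = 0" by simp
    with norm_row show False by simp
  qed
  then obtain k where "W$i$k \<noteq> 0" by blast
  have "diagm (\<lambda>i. of_real (b i)) = (cadj V ** V) ** diagm (\<lambda>i. of_real (b i)) ** (cadj V ** V)"
    using V by (simp add: qunitary_def)
  also have "\<dots> = cadj V ** (V ** diagm (\<lambda>i. of_real (b i)) ** cadj V) ** V"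
    by (simp add: matrix_mul_assoc)
  also have "\<dots> = W ** diagm (\<lambda>i. of_real (a i)) ** cadj W"
    unfolding W_def cadj_mult eq[symmetric] by (simp add: matrix_mul_assoc)
  finally have "diagm (\<lambda>i. of_real (b i)) $ i $ i = (W ** diagm (\<lambda>i. of_real (a i)) ** cadj W) $ i $ i"
    by simp
  hence "of_real (b i) = (of_real (\<Sum>k\<in>UNIV. a k * (cmod (W$i$k))\<^sup>2) :: complex)"
    unfolding mult_diagm_mult_entry by (simp add: cadj_entry of_real_cmod_power2 mult_ac)
  hence "b i = (\<Sum>k\<in>UNIV. a k * (cmod (W$i$k))\<^sup>2)" by (simp only: of_real_eq_iff)
  also have "\<dots> > 0"
    using pos \<open>W$i$k \<noteq> 0\<close> by (intro sum_pos2[where i = k]) (simp_all add: less_imp_le)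
  finally show ?thesis .
qed

section \<open>The Gibbs state and its powers\<close>

lemma hfun_diagonalization:
  assumes "\<exists>U D. qunitary U \<and> A = U ** diagm (\<lambda>i. of_real (D i)) ** cadj U"
  obtains U D where "qunitary U" "A = U ** diagm (\<lambda>i. of_real (D i)) ** cadj U"
    "\<And>f. hfun f A = U ** diagm (\<lambda>i. of_real (f (D i))) ** cadj U"
proof -
  define p where "p = (SOME p. qunitary (fst p) \<and>
                  A = fst p ** diagm (\<lambda>i. complex_of_real (snd p i)) ** cadj (fst p))"
  have "\<exists>p. qunitary (fst p) \<and> A = fst p ** diagm (\<lambda>i. of_real (snd p i)) ** cadj (fst p)"
    using assms by auto
  hence "qunitary (fst p) \<and> A = fst p ** diagm (\<lambda>i. of_real (snd p i)) ** cadj (fst p)"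
    unfolding p_def by (rule someI_ex)
  moreover have "hfun f A = fst p ** diagm (\<lambda>i. of_real (f (snd p i))) ** cadj (fst p)" for f
    unfolding hfun_def p_def[symmetric] by (simp add: case_prod_beta)
  ultimately show thesis by (intro that) auto
qed

lemma gibbs_diagonalization:
  assumes "hermitian H"
  obtains U d where "qunitary U" "\<And>i. 0 < d i"
    "gibbs \<beta> H = U ** diagm (\<lambda>i. of_real (d i)) ** cadj U"
    "\<And>t. mpowr (gibbs \<beta> H) t = U ** diagm (\<lambda>i. of_real (d i powr t)) ** cadj U"
proof -
  obtain U1 h where "qunitary U1" and
    hfun_H: "\<And>f. hfun f H = U1 ** diagm (\<lambda>i. of_real (f (h i))) ** cadj U1"
    using hfun_diagonalization[OF hermitian_unitary_diagonalization[OF assms]] by blast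
  define Z where "Z = (\<Sum>i\<in>UNIV. exp (- \<beta> * h i))"
  define e where "e i = exp (- \<beta> * h i) / Z" for i
  have "0 < Z" unfolding Z_def by (simp add: sum_pos)
  hence "0 < e i" for i by (simp add: e_def)
  have "trace (hfun (\<lambda>x. exp (- \<beta> * x)) H) = of_real Z"
    unfolding hfun_H trace_unitary_conj_diagm[OF \<open>qunitary U1\<close>] Z_def by simp
  hence "gibbs \<beta> H = cscale (inverse (of_real Z)) (U1 ** diagm (\<lambda>i. of_real (exp (- \<beta> * h i))) ** cadj U1)"
    unfolding gibbs_def Let_def by (simp add: hfun_H)
  also have "\<dots> = U1 ** diagm (\<lambda>i. of_real (e i)) ** cadj U1"
    unfolding cscale_conj_diagm e_def by (simp add: divide_inverse mult.commute)
  finally have gibbs_U1: "gibbs \<beta> H = U1 ** diagm (\<lambda>i. of_real (e i)) ** cadj U1" .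
  hence "\<exists>U D. qunitary U \<and> gibbs \<beta> H = U ** diagm (\<lambda>i. of_real (D i)) ** cadj U"
    using \<open>qunitary U1\<close> by blast
  \<comment> \<open>mpowr diagonalizes the Gibbs state afresh (by SOME), so positivity must be transferred\<close>
  then obtain U d where "qunitary U" and gibbs_U: "gibbs \<beta> H = U ** diagm (\<lambda>i. of_real (d i)) ** cadj U"
    and hfun_gibbs: "\<And>f. hfun f (gibbs \<beta> H) = U ** diagm (\<lambda>i. of_real (f (d i))) ** cadj U"
    using hfun_diagonalization by blast
  have "U1 ** diagm (\<lambda>i. of_real (e i)) ** cadj U1 = U ** diagm (\<lambda>i. of_real (d i)) ** cadj U"
    unfolding gibbs_U1[symmetric] gibbs_U[symmetric] ..
  hence dpos: "0 < d i" for i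
    by (rule unitary_conj_diagm_pos[OF \<open>qunitary U1\<close> \<open>qunitary U\<close> _ \<open>\<And>i. 0 < e i\<close>])
  have mpowr_U: "mpowr (gibbs \<beta> H) t = U ** diagm (\<lambda>i. of_real (d i powr t)) ** cadj U" for t
    unfolding mpowr_def by (rule hfun_gibbs)
  show thesis using \<open>qunitary U\<close> dpos gibbs_U mpowr_U by (rule that)
qed

context
  fixes \<beta> :: real and H :: "'d::finite cmat"
  assumes H: "hermitian H"
begin

lemma mpowr_gibbs_add:
  "mpowr (gibbs \<beta> H) a ** mpowr (gibbs \<beta> H) b = mpowr (gibbs \<beta> H) (a + b)"
proof -
  obtain U d where "qunitary U" "\<And>i. 0 < d i"
    and mp: "\<And>t. mpowr (gibbs \<beta> H) t = U ** diagm (\<lambda>i. of_real (d i powr t)) ** cadj U"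
    using gibbs_diagonalization[OF H] by metis
  show ?thesis
    unfolding mp unitary_conj_diagm_mult[OF \<open>qunitary U\<close>]
    using \<open>\<And>i. 0 < d i\<close> by (simp add: powr_add)
qed

lemma mpowr_gibbs_0: "mpowr (gibbs \<beta> H) 0 = mat 1"
proof -
  obtain U d where "qunitary U" "\<And>i. 0 < d i"
    and mp: "\<And>t. mpowr (gibbs \<beta> H) t = U ** diagm (\<lambda>i. of_real (d i powr t)) ** cadj U"
    using gibbs_diagonalization[OF H] by metis
  have "d i powr 0 = 1" for i using \<open>0 < d i\<close> by simp
  thus ?thesis unfolding mp by (simp add: diagm_one unitary_right[OF \<open>qunitary U\<close>])
qed

lemma mpowr_gibbs_1: "mpowr (gibbs \<beta> H) 1 = gibbs \<beta> H"
proof -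
  obtain U d where "\<And>i. 0 < d i" and "gibbs \<beta> H = U ** diagm (\<lambda>i. of_real (d i)) ** cadj U"
    and "\<And>t. mpowr (gibbs \<beta> H) t = U ** diagm (\<lambda>i. of_real (d i powr t)) ** cadj U"
    using gibbs_diagonalization[OF H] by metis
  thus ?thesis by (simp add: less_imp_le)
qed

end

section \<open>The s-inner product and weighted Kraus maps\<close>

lemma sinner_add_left: "sinner s \<rho> (A1 + A2) B = sinner s \<rho> A1 B + sinner s \<rho> A2 B"
  unfolding sinner_def by (simp add: cadj_add matrix_add_rdistrib trace_add)

lemma sinner_add_right: "sinner s \<rho> A (B1 + B2) = sinner s \<rho> A B1 + sinner s \<rho> A B2"
  unfolding sinner_def by (simp add: matrix_add_ldistrib matrix_add_rdistrib trace_add)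

lemma sinner_cscale_left: "sinner s \<rho> (cscale c A) B = cnj c * sinner s \<rho> A B"
  unfolding sinner_def by (simp add: cadj_cscale cscale_mult_left trace_cscale)

lemma sinner_cscale_right: "sinner s \<rho> A (cscale c B) = c * sinner s \<rho> A B"
  unfolding sinner_def by (simp add: cscale_mult_left cscale_mult_right trace_cscale)

lemma sinner_sum_left: "sinner s \<rho> (sum f I) B = (\<Sum>x\<in>I. sinner s \<rho> (f x) B)"
  unfolding sinner_def by (simp add: cadj_sum matrix_sum_left trace_sum)

lemma sinner_sum_right: "sinner s \<rho> A (sum f I) = (\<Sum>x\<in>I. sinner s \<rho> A (f x))"
  unfolding sinner_def by (simp add: matrix_sum_left matrix_sum_right trace_sum)

lemma bilinear_Re_sinner: "bilinear (\<lambda>A B. Re (sinner s \<rho> A B))"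
  unfolding bilinear_def
  by (auto intro!: linearI simp: sinner_add_left sinner_add_right scaleR_eq_cscale
      sinner_cscale_left sinner_cscale_right)

lemma detailed_balanceD: "detailed_balance s \<rho> T \<Longrightarrow> sinner s \<rho> A (T B) = sinner s \<rho> (T A) B"
  by (simp add: detailed_balance_def)

lemma sinner_mat1_left_gibbs:
  assumes "hermitian H"
  shows "sinner s (gibbs \<beta> H) (mat 1) X = trace (gibbs \<beta> H ** X)"
proof -
  have "sinner s (gibbs \<beta> H) (mat 1) X = trace (mpowr (gibbs \<beta> H) s ** (mpowr (gibbs \<beta> H) (1 - s) ** X))"
    unfolding sinner_def by (simp add: trace_mul_sym[of _ "mpowr (gibbs \<beta> H) s"])
  thus ?thesis by (simp add: matrix_mul_assoc mpowr_gibbs_add[OF assms] mpowr_gibbs_1[OF assms])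
qed

lemma wkraus_adj_linear: "linear (wkraus_adj c K I)"
proof (rule linearI)
  show "wkraus_adj c K I (A + B) = wkraus_adj c K I A + wkraus_adj c K I B" for A B
    unfolding wkraus_adj_def by (simp add: matrix_add_ldistrib matrix_add_rdistrib cscale_add sum.distrib)
  show "wkraus_adj c K I (r *\<^sub>R A) = r *\<^sub>R wkraus_adj c K I A" for r A
    unfolding wkraus_adj_def scaleR_eq_cscale
    by (simp add: cscale_mult_left cscale_mult_right cscale_cscale cscale_sum mult.commute)
qed

lemma kraus_adj_mat1: "is_channel K I \<Longrightarrow> kraus_adj K I (mat 1) = mat 1"
  unfolding wkraus_adj_def is_channel_def by simp

lemma cadj_wkraus_adj: "cadj (wkraus_adj c K I A) = wkraus_adj c K I (cadj A)"
  unfolding wkraus_adj_def by (simp add: cadj_sum cadj_cscale cadj_mult matrix_mul_assoc)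

lemma trace_mult_wkraus_adj: "trace (X ** wkraus_adj c K I B) = trace (wkraus c K I X ** B)"
proof -
  have "trace (X ** (cadj (K u) ** B ** K u)) = trace ((K u ** X ** cadj (K u)) ** B)" for u
  proof -
    have "trace (X ** (cadj (K u) ** B ** K u)) = trace ((X ** cadj (K u) ** B) ** K u)"
      by (simp add: matrix_mul_assoc)
    also have "\<dots> = trace (K u ** (X ** cadj (K u) ** B))" by (rule trace_mul_sym)
    finally show ?thesis by (simp add: matrix_mul_assoc)
  qed
  thus ?thesis
    unfolding wkraus_adj_def wkraus_def
    by (simp add: matrix_sum_left matrix_sum_right trace_sum cscale_mult_left cscale_mult_right trace_cscale)
qed

lemma detailed_balance_wkraus_conj:
  assumes db: "detailed_balance s \<rho> (wkraus_adj c K I)"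
  shows "wkraus c K I (mpowr \<rho> s ** X ** mpowr \<rho> (1 - s)) =
    mpowr \<rho> s ** wkraus_adj c K I X ** mpowr \<rho> (1 - s)"
proof (rule matrix_eq_if_trace_mult_eq)
  fix B
  let ?P = "mpowr \<rho> (1 - s)" and ?Q = "mpowr \<rho> s" and ?T = "wkraus_adj c K I"
  have "trace (wkraus c K I (?Q ** X ** ?P) ** B) = trace ((?Q ** X ** ?P) ** ?T B)"
    by (rule trace_mult_wkraus_adj[symmetric])
  also have "\<dots> = trace (?Q ** (X ** ?P ** ?T B))" by (simp add: matrix_mul_assoc)
  also have "\<dots> = trace ((X ** ?P ** ?T B) ** ?Q)" by (rule trace_mul_sym)
  also have "\<dots> = sinner s \<rho> (cadj X) (?T B)"
    unfolding sinner_def by (simp add: matrix_mul_assoc)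
  also have "\<dots> = sinner s \<rho> (?T (cadj X)) B"
    using db unfolding detailed_balance_def by blast
  also have "\<dots> = trace ((?T X ** ?P ** B) ** ?Q)"
    unfolding sinner_def cadj_wkraus_adj by (simp add: matrix_mul_assoc)
  also have "\<dots> = trace (?Q ** (?T X ** ?P ** B))" by (rule trace_mul_sym)
  also have "\<dots> = trace ((?Q ** ?T X ** ?P) ** B)" by (simp add: matrix_mul_assoc)
  finally show "trace (wkraus c K I (?Q ** X ** ?P) ** B) = trace ((?Q ** ?T X ** ?P) ** B)" .
qed

lemma detailed_balance_eigenvalue_bounds:
  assumes H: "hermitian H" and db: "detailed_balance s (gibbs \<beta> H) (wkraus_adj c K I)"
    and spec: "\<And>\<mu> Z. Z \<noteq> 0 \<Longrightarrow> wkraus c K I Z = cscale \<mu> Z \<Longrightarrow> 0 \<le> Re \<mu> \<and> Re \<mu> \<le> 1"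
    and "X \<noteq> 0" and eig: "wkraus_adj c K I X = m *\<^sub>R X"
  shows "0 \<le> m \<and> m \<le> 1"
proof -
  let ?\<rho> = "gibbs \<beta> H"
  define Z where "Z = mpowr ?\<rho> s ** X ** mpowr ?\<rho> (1 - s)"
  have "wkraus c K I Z = cscale (of_real m) Z"
    unfolding Z_def detailed_balance_wkraus_conj[OF db] eig scaleR_eq_cscale
    by (simp add: cscale_mult_left cscale_mult_right)
  moreover have "mpowr ?\<rho> (- s) ** Z ** mpowr ?\<rho> (s - 1) = X"
    unfolding Z_def
    by (simp add: matrix_mul_assoc mpowr_gibbs_add[OF H] mpowr_gibbs_0[OF H]
        flip: matrix_mul_assoc[of _ _ "mpowr ?\<rho> (s - 1)"])
  hence "Z \<noteq> 0" using \<open>X \<noteq> 0\<close> by auto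
  ultimately show ?thesis using spec[of Z "of_real m"] by simp
qed

lemma covM_eq_trace: "covM \<rho> Ob U = trace (\<rho> ** Mhat_adj \<rho> Ob U (Mhat_adj \<rho> Ob U (mat 1)))"
proof -
  define w where "w x = x - expM \<rho> Ob U" for x
  have cyclic: "trace (Ob y ** Ob x ** \<rho> ** cadj (Ob x) ** cadj (Ob y)) =
      trace (\<rho> ** (cadj (Ob x) ** (cadj (Ob y) ** Ob y) ** Ob x))" for x y
  proof -
    have "trace (Ob y ** Ob x ** \<rho> ** cadj (Ob x) ** cadj (Ob y)) =
        trace ((Ob y ** Ob x) ** (\<rho> ** cadj (Ob x) ** cadj (Ob y)))" by (simp add: matrix_mul_assoc)
    also have "\<dots> = trace ((\<rho> ** cadj (Ob x) ** cadj (Ob y)) ** (Ob y ** Ob x))" by (rule trace_mul_sym)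
    finally show ?thesis by (simp add: matrix_mul_assoc)
  qed
  have "trace (\<rho> ** Mhat_adj \<rho> Ob U (Mhat_adj \<rho> Ob U (mat 1))) =
    (\<Sum>x\<in>U. of_real (w x) * (\<Sum>y\<in>U. of_real (w y) *
       trace (\<rho> ** (cadj (Ob x) ** (cadj (Ob y) ** Ob y) ** Ob x))))"
    unfolding Mhat_adj_def wkraus_adj_def w_def[symmetric]
    by (simp add: matrix_sum_right matrix_sum_left trace_sum cscale_mult_right cscale_mult_left trace_cscale)
  also have "\<dots> = covM \<rho> Ob U"
    unfolding covM_def w_def[symmetric] cyclic by (simp add: sum_distrib_left mult.assoc)
  finally show ?thesis by simp
qed

lemma covM_gibbs_eq_sinner:
  assumes "hermitian H" and db: "detailed_balance s (gibbs \<beta> H) (Mhat_adj (gibbs \<beta> H) Ob U)"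
  shows "covM (gibbs \<beta> H) Ob U = sinner s (gibbs \<beta> H) (Mhat_adj (gibbs \<beta> H) Ob U (mat 1))
    (Mhat_adj (gibbs \<beta> H) Ob U (mat 1))"
proof -
  let ?A = "Mhat_adj (gibbs \<beta> H) Ob U (mat 1)"
  have "covM (gibbs \<beta> H) Ob U = trace (gibbs \<beta> H ** Mhat_adj (gibbs \<beta> H) Ob U ?A)"
    by (rule covM_eq_trace)
  also have "\<dots> = sinner s (gibbs \<beta> H) (mat 1) (Mhat_adj (gibbs \<beta> H) Ob U ?A)"
    by (rule sinner_mat1_left_gibbs[OF assms(1), symmetric])
  also have "\<dots> = sinner s (gibbs \<beta> H) ?A ?A" by (rule detailed_balanceD[OF db])
  finally show ?thesis .
qed

section \<open>Orthonormal bases for the s-inner product\<close>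

locale sinner_onb =
  fixes s :: real and \<rho> :: "'d::finite cmat" and Y :: "nat \<Rightarrow> 'd cmat" and D :: nat
  assumes orthonormal: "\<And>i j. i < D \<Longrightarrow> j < D \<Longrightarrow> sinner s \<rho> (Y i) (Y j) = (if i = j then 1 else 0)"
    and spanning: "\<And>X. \<exists>c. X = (\<Sum>i<D. cscale (c i) (Y i))"
begin

lemma expansion: "X = (\<Sum>i<D. cscale (sinner s \<rho> (Y i) X) (Y i))"
proof -
  obtain c where c: "X = (\<Sum>i<D. cscale (c i) (Y i))" using spanning by blast
  have "sinner s \<rho> (Y j) X = c j" if "j < D" for j
  proof -
    have "sinner s \<rho> (Y j) X = (\<Sum>i<D. c i * sinner s \<rho> (Y j) (Y i))"
      by (subst c) (simp add: sinner_sum_right sinner_cscale_right)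
    also have "\<dots> = c j" using that by (simp add: orthonormal if_distrib cong: if_cong)
    finally show ?thesis .
  qed
  thus ?thesis by (subst (1) c) simp
qed

lemma parseval: "sinner s \<rho> X Z = (\<Sum>i<D. cnj (sinner s \<rho> (Y i) X) * sinner s \<rho> (Y i) Z)"
  by (subst (1) expansion[of X]) (simp add: sinner_sum_left sinner_cscale_left)

lemma sinner_commute: "sinner s \<rho> Z X = cnj (sinner s \<rho> X Z)"
  unfolding parseval[of Z] parseval[of X] by (simp add: mult.commute)

lemma Re_sinner_self: "Re (sinner s \<rho> X X) = (\<Sum>i<D. (cmod (sinner s \<rho> (Y i) X))\<^sup>2)"
  unfolding parseval[of X X] cnj_mult_self Re_sum Re_complex_of_real ..

lemma Re_sinner_self_nonneg: "0 \<le> Re (sinner s \<rho> X X)"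
  unfolding Re_sinner_self by (simp add: sum_nonneg)

lemma Re_sinner_self_eq_0_iff: "Re (sinner s \<rho> X X) = 0 \<longleftrightarrow> X = 0"
proof
  assume "Re (sinner s \<rho> X X) = 0"
  hence "\<forall>i<D. sinner s \<rho> (Y i) X = 0" unfolding Re_sinner_self by (simp add: sum_nonneg_eq_0_iff)
  thus "X = 0" by (subst expansion) simp
qed (simp add: sinner_def trace_def)

lemma sum_cmod_coeff_mult_le:
  "(\<Sum>j<D. cmod (sinner s \<rho> (Y j) A * sinner s \<rho> B (Y j))) \<le>
     sqrt (Re (sinner s \<rho> A A)) * sqrt (Re (sinner s \<rho> B B))"
proof -
  have "(\<Sum>j<D. cmod (sinner s \<rho> (Y j) A * sinner s \<rho> B (Y j))) =
      (\<Sum>j<D. \<bar>cmod (sinner s \<rho> (Y j) A)\<bar> * \<bar>cmod (sinner s \<rho> (Y j) B)\<bar>)"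
    by (simp add: norm_mult sinner_commute[of B])
  also have "\<dots> \<le> L2_set (\<lambda>j. cmod (sinner s \<rho> (Y j) A)) {..<D} * L2_set (\<lambda>j. cmod (sinner s \<rho> (Y j) B)) {..<D}"
    by (rule L2_set_mult_ineq)
  finally show ?thesis unfolding L2_set_def Re_sinner_self .
qed

lemma Re_sinner_eigenbasis_le:
  assumes sa: "\<And>X Z. sinner s \<rho> X (T Z) = sinner s \<rho> (T X) Z"
    and eig: "\<And>i. i < D \<Longrightarrow> T (Y i) = cscale (of_real (lam i)) (Y i)"
    and le1: "\<And>i. i < D \<Longrightarrow> lam i \<le> 1"
  shows "Re (sinner s \<rho> X (T X)) \<le> Re (sinner s \<rho> X X)"
proof -
  have "cnj (sinner s \<rho> (Y i) X) * sinner s \<rho> (Y i) (T X) =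
      of_real (lam i * (cmod (sinner s \<rho> (Y i) X))\<^sup>2)" if "i < D" for i
  proof -
    have "sinner s \<rho> (Y i) (T X) = of_real (lam i) * sinner s \<rho> (Y i) X"
      unfolding sa eig[OF that] by (simp add: sinner_cscale_left)
    hence "cnj (sinner s \<rho> (Y i) X) * sinner s \<rho> (Y i) (T X) =
        of_real (lam i) * (cnj (sinner s \<rho> (Y i) X) * sinner s \<rho> (Y i) X)"
      by (simp add: mult_ac)
    thus ?thesis by (simp only: cnj_mult_self of_real_mult)
  qed
  hence "Re (sinner s \<rho> X (T X)) = (\<Sum>i<D. lam i * (cmod (sinner s \<rho> (Y i) X))\<^sup>2)"
    unfolding parseval[of X "T X"] by simp
  also have "\<dots> \<le> (\<Sum>i<D. (cmod (sinner s \<rho> (Y i) X))\<^sup>2)"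
  proof (rule sum_mono)
    fix i assume "i \<in> {..<D}"
    hence "lam i \<le> 1" using le1 by simp
    thus "lam i * (cmod (sinner s \<rho> (Y i) X))\<^sup>2 \<le> (cmod (sinner s \<rho> (Y i) X))\<^sup>2"
      using mult_right_mono[of "lam i" 1 "(cmod (sinner s \<rho> (Y i) X))\<^sup>2"] by simp
  qed
  finally show ?thesis unfolding Re_sinner_self .
qed

lemma wkraus_adj_quadratic_form_bounds:
  assumes \<rho>: "\<rho> = gibbs \<beta> H" and H: "hermitian H" and db: "detailed_balance s \<rho> (wkraus_adj c K I)"
    and spec: "\<And>\<mu> Z. Z \<noteq> 0 \<Longrightarrow> wkraus c K I Z = cscale \<mu> Z \<Longrightarrow> 0 \<le> Re \<mu> \<and> Re \<mu> \<le> 1"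
  shows "0 \<le> Re (sinner s \<rho> X (wkraus_adj c K I X))"
    and "Re (sinner s \<rho> X (wkraus_adj c K I X)) \<le> Re (sinner s \<rho> X X)"
proof -
  let ?g = "\<lambda>A B. Re (sinner s \<rho> A B)" and ?T = "wkraus_adj c K I"
  have sym: "?g A B = ?g B A" for A B by (simp add: sinner_commute[of A])
  have sa: "?g A (?T B) = ?g (?T A) B" for A B using db unfolding detailed_balance_def by simp
  have eig: "0 \<le> m \<and> m \<le> 1" if "A \<noteq> 0" "?T A = m *\<^sub>R A" for A m
    using detailed_balance_eigenvalue_bounds[OF H db[unfolded \<rho>] spec that] by simp
  show "0 \<le> ?g X (?T X)"
    using selfadjoint_quadratic_form_ge[where g = ?g and T = ?T and a = 0, OF bilinear_Re_sinner sym
        Re_sinner_self_nonneg Re_sinner_self_eq_0_iff wkraus_adj_linear sa] eig by simp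
  show "?g X (?T X) \<le> ?g X X"
    using selfadjoint_quadratic_form_le[where g = ?g and T = ?T and b = 1, OF bilinear_Re_sinner sym
        Re_sinner_self_nonneg Re_sinner_self_eq_0_iff wkraus_adj_linear sa] eig by simp
qed

lemma Re_sinner_sandwich_le:
  assumes \<rho>: "\<rho> = gibbs \<beta> H" and H: "hermitian H"
    and N_db: "detailed_balance s \<rho> (wkraus_adj c K I)"
    and N_spec: "\<And>\<mu> Z. Z \<noteq> 0 \<Longrightarrow> wkraus c K I Z = cscale \<mu> Z \<Longrightarrow> 0 \<le> Re \<mu> \<and> Re \<mu> \<le> 1"
    and M_db: "detailed_balance s \<rho> M"
    and eig: "\<And>i. i < D \<Longrightarrow> M (wkraus_adj c K I (M (Y i))) = cscale (of_real (lam i)) (Y i)"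
    and le1: "\<And>i. i < D \<Longrightarrow> lam i \<le> 1"
  shows "Re (sinner s \<rho> (M (wkraus_adj c K I A)) (M (wkraus_adj c K I A))) \<le> Re (sinner s \<rho> A A)"
proof (rule selfadjoint_sandwich_le[where g = "\<lambda>X Z. Re (sinner s \<rho> X Z)" and N = "wkraus_adj c K I"
      and M = M])
  let ?N = "wkraus_adj c K I"
  show "bilinear (\<lambda>X Z. Re (sinner s \<rho> X Z))" by (rule bilinear_Re_sinner)
  show "Re (sinner s \<rho> X Z) = Re (sinner s \<rho> Z X)" for X Z by (simp add: sinner_commute[of X])
  show "0 \<le> Re (sinner s \<rho> X X)" for X by (rule Re_sinner_self_nonneg)
  show "linear ?N" by (rule wkraus_adj_linear)
  show "Re (sinner s \<rho> X (?N Z)) = Re (sinner s \<rho> (?N X) Z)" for X Z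
    by (simp add: detailed_balanceD[OF N_db])
  show "0 \<le> Re (sinner s \<rho> X (?N X))" for X
    by (rule wkraus_adj_quadratic_form_bounds(1)[OF \<rho> H N_db]) (rule N_spec)
  show "Re (sinner s \<rho> X (?N X)) \<le> Re (sinner s \<rho> X X)" for X
    by (rule wkraus_adj_quadratic_form_bounds(2)[OF \<rho> H N_db]) (rule N_spec)
  show "Re (sinner s \<rho> X (M Z)) = Re (sinner s \<rho> (M X) Z)" for X Z
    by (simp add: detailed_balanceD[OF M_db])
  show "Re (sinner s \<rho> X (M (?N (M X)))) \<le> Re (sinner s \<rho> X X)" for X
    by (rule Re_sinner_eigenbasis_le[OF _ eig le1])
      (simp add: detailed_balanceD[OF M_db] detailed_balanceD[OF N_db])
qed

end

theorem lemma5p4: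
  fixes n :: nat and \<beta> s :: real
    and H :: "complex^'d::finite^'d"
    and K :: "'k \<Rightarrow> complex^'d^'d" and J :: "'k set"
    and Ob :: "real \<Rightarrow> complex^'d^'d" and U :: "real set"
    and Y :: "nat \<Rightarrow> complex^'d^'d" and lam :: "nat \<Rightarrow> real"
  defines "\<rho> \<equiv> gibbs \<beta> H"
  defines "D \<equiv> CARD('d)^2"
  defines "Edag \<equiv> kraus_adj Ob U \<circ> kraus_adj K J \<circ> kraus_adj Ob U"
  defines "Ehatdag \<equiv> Mhat_adj \<rho> Ob U \<circ> kraus_adj K J \<circ> kraus_adj Ob U"
  defines "\<alpha> \<equiv> (\<lambda>i j. sinner s \<rho> (Y j) (Ehatdag (Y i)))"
  assumes dim: "CARD('d) = 2^n"
    and herm: "hermitian H"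
    and beta: "\<beta> > 0"
    and N_channel: "is_channel K J"
    and N_db: "detailed_balance s \<rho> (kraus_adj K J)"
    and N_fix: "kraus K J \<rho> = \<rho>"
    and N_unique: "\<forall>\<sigma>. density \<sigma> \<and> kraus K J \<sigma> = \<sigma> \<longrightarrow> \<sigma> = \<rho>"
    and N_spec: "\<forall>\<mu> X. X \<noteq> 0 \<and> kraus K J X = cscale \<mu> X \<longrightarrow>
                   \<mu> \<in> \<real> \<and> 0 \<le> Re \<mu> \<and> Re \<mu> \<le> 1"
    and M_channel: "is_channel Ob U"
    and M_db: "detailed_balance s \<rho> (kraus_adj Ob U)"
    and Mhat_db: "detailed_balance s \<rho> (Mhat_adj \<rho> Ob U)"
    and Y_orth: "\<forall>i<D. \<forall>j<D. sinner s \<rho> (Y i) (Y j) = (if i = j then 1 else 0)"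
    and Y_span: "\<forall>X. \<exists>c. X = (\<Sum>i<D. cscale (c i) (Y i))"
    and Y_eig: "\<forall>i<D. Edag (Y i) = cscale (complex_of_real (lam i)) (Y i)"
    and Y_1: "Y 0 = mat 1"
    and lam_1: "lam 0 = 1"
    and lam_gap: "\<forall>i. 0 < i \<and> i < D \<longrightarrow> lam i < 1"
    and lam_sorted: "\<forall>i j. 0 < i \<and> i \<le> j \<and> j < D \<longrightarrow> lam j \<le> lam i"
    and lam_nonneg: "\<forall>i<D. 0 \<le> lam i"
  shows "(\<Sum>j<D. cmod (\<alpha> 0 j * \<alpha> j 0)) \<le> Re (covM \<rho> Ob U)"
proof -
  interpret sinner_onb s \<rho> Y D using Y_orth Y_span by unfold_locales blast+
  have \<rho>: "\<rho> = gibbs \<beta> H" unfolding \<rho>_def ..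
  let ?N = "kraus_adj K J" and ?M = "kraus_adj Ob U"
  define A where "A = Mhat_adj \<rho> Ob U (mat 1)"
  have "\<alpha> 0 j = sinner s \<rho> (Y j) A" for j
    unfolding \<alpha>_def Ehatdag_def A_def Y_1 using M_channel N_channel by (simp add: kraus_adj_mat1)
  moreover have "\<alpha> j 0 = sinner s \<rho> (?M (?N A)) (Y j)" for j
    unfolding \<alpha>_def Ehatdag_def A_def Y_1
    by (simp add: detailed_balanceD[OF Mhat_db] detailed_balanceD[OF N_db] detailed_balanceD[OF M_db])
  ultimately have "(\<Sum>j<D. cmod (\<alpha> 0 j * \<alpha> j 0)) \<le>
      sqrt (Re (sinner s \<rho> A A)) * sqrt (Re (sinner s \<rho> (?M (?N A)) (?M (?N A))))"
    using sum_cmod_coeff_mult_le by simp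
  also have "\<dots> \<le> sqrt (Re (sinner s \<rho> A A)) * sqrt (Re (sinner s \<rho> A A))"
  proof (intro mult_left_mono real_sqrt_le_mono Re_sinner_sandwich_le[OF \<rho> herm N_db _ M_db])
    show "0 \<le> Re \<mu> \<and> Re \<mu> \<le> 1" if "Z \<noteq> 0" "kraus K J Z = cscale \<mu> Z" for \<mu> Z
      using N_spec that by blast
    show "?M (?N (?M (Y i))) = cscale (of_real (lam i)) (Y i)" if "i < D" for i
      using Y_eig that unfolding Edag_def by simp
    show "lam i \<le> 1" if "i < D" for i
      using lam_1 lam_gap that by (cases "i = 0") auto
  qed (simp add: Re_sinner_self_nonneg)
  also have "\<dots> = Re (covM \<rho> Ob U)"
    using covM_gibbs_eq_sinner[OF herm Mhat_db[unfolded \<rho>_def]] Re_sinner_self_nonneg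
    unfolding \<rho>_def A_def by simp
  finally show ?thesis .
qed

end
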